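(* Let $R,T$ be finite disjoint sets with $R\ne\emptyset$ and $|R\sqcup T|\ge3$, and let $c$ be a metric cost function on $R\sqcup T$ which is injective on the edge set $E$ of the robot-task graph $G$ (i.e. $c(\{x,y\})\ne c(\{x',y'\})$ for distinct edges). Then $C(\textsc{Assign}(\mathcal{M}))\le 2\,C(\textsc{MinSum}(\mathcal{M}))$.
   Context: A metric cost function $c:(R\sqcup T)\times(R\sqcup T)\to\mathbb{R}_+$ satisfies $c(x,y)\ge0$, $c(x,y)=0$ iff $x=y$, $c(x,y)=c(y,x)$ and $c(x,z)\le c(x,y)+c(y,z)$. The robot-task graph $G$ has vertex set $R\sqcup T$, edge set $E$ consisting of all 2-element subsets of $R\sqcup T$, with edge cost $c(\{x,y\})=c(x,y)$. For a list $P=(v_0,\dots,v_n)$ of vertices, its cost is $C(P)=\sum_{i=0}^{n-1}c(v_i,v_{i+1})$ (and $0$ if $n=0$). A robot-route is such a list with $v_0\in R$ and $v_j\in T$ for $j\ge1$. A plan is a family of $|R|$ robot-routes whose vertex sets partition $R\sqcup T$; its cost is the sum of the costs of its routes. $\textsc{MinSum}(\mathcal{M})$ denotes a plan of minimum cost. $\textsc{Auction}(\mathcal{M})$: set $A=\emptyset$ and $a(r)=0$ for all $r\in R$. For $k=1,\dots,|T|$: let $w_k=\{s,t\}$ be the edge with $s\in R\cup A$, $t\in T\setminus A$ minimising $c(s,t)$ (unique by injectivity); set $a(t)=k$ and $A\leftarrow A\cup\{t\}$. Output the list $W=(w_1,\dots,w_{|T|})$ and the function $a:R\sqcup T\to\{0,\dots,|T|\}$.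 $\textsc{DFShortcut}$: the edges of $W$ form a forest each of whose components contains exactly one robot. For each robot $r$ let $V(r)$ be the vertex set of its component; start with $P(r)=(r)$ and, while $P(r)$ does not contain all of $V(r)$, scan the vertices of $P(r)$ from last to first, and at the first vertex $t$ having a neighbour (via an edge of $W$) not yet in $P(r)$, append the such neighbour $s$ with smallest $a(s)$. Output the plan $\{P(r):r\in R\}$. $\textsc{Assign}(\mathcal{M})$ is the plan obtained by applying $\textsc{DFShortcut}$ to the output $(W,a)$ of $\textsc{Auction}(\mathcal{M})$. *)

theory Defs
  imports Complex_Main
begin

fun pcost :: "('v \<Rightarrow> 'v \<Rightarrow> real) \<Rightarrow> 'v list \<Rightarrow> real" where
  "pcost c (x # y # xs) = c x y + pcost c (y # xs)"
| "pcost c _ = 0"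

definition metric_cost :: "'v set \<Rightarrow> ('v \<Rightarrow> 'v \<Rightarrow> real) \<Rightarrow> bool" where
  "metric_cost V c \<longleftrightarrow>
     (\<forall>x\<in>V. \<forall>y\<in>V. c x y \<ge> 0 \<and> (c x y = 0 \<longleftrightarrow> x = y) \<and> c x y = c y x) \<and>
     (\<forall>x\<in>V. \<forall>y\<in>V. \<forall>z\<in>V. c x z \<le> c x y + c y z)"

definition edge_injective :: "'v set \<Rightarrow> ('v \<Rightarrow> 'v \<Rightarrow> real) \<Rightarrow> bool" where
  "edge_injective V c \<longleftrightarrow>
     (\<forall>x\<in>V. \<forall>y\<in>V. \<forall>x'\<in>V. \<forall>y'\<in>V. x \<noteq> y \<longrightarrow> x' \<noteq> y' \<longrightarrow> {x, y} \<noteq> {x', y'}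
        \<longrightarrow> c x y \<noteq> c x' y')"

definition robot_route :: "'v set \<Rightarrow> 'v set \<Rightarrow> 'v list \<Rightarrow> bool" where
  "robot_route R T p \<longleftrightarrow> p \<noteq> [] \<and> hd p \<in> R \<and> set (tl p) \<subseteq> T"

definition is_plan :: "'v set \<Rightarrow> 'v set \<Rightarrow> ('v \<Rightarrow> 'v list) \<Rightarrow> bool" where
  "is_plan R T P \<longleftrightarrow>
     (\<forall>r\<in>R. robot_route R T (P r) \<and> hd (P r) = r) \<and>
     (\<Union>r\<in>R. set (P r)) = R \<union> T \<and>
     (\<forall>r\<in>R. \<forall>r'\<in>R. r \<noteq> r' \<longrightarrow> set (P r) \<inter> set (P r') = {})"

definition plan_cost :: "('v \<Rightarrow> 'v \<Rightarrow> real) \<Rightarrow> 'v set \<Rightarrow> ('v \<Rightarrow> 'v list) \<Rightarrow> real" where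
  "plan_cost c R P = (\<Sum>r\<in>R. pcost c (P r))"

definition minsum_cost :: "('v \<Rightarrow> 'v \<Rightarrow> real) \<Rightarrow> 'v set \<Rightarrow> 'v set \<Rightarrow> real" where
  "minsum_cost c R T = Inf (plan_cost c R ` {P. is_plan R T P})"

(* Auction: state (A, W, a); W is the list of chosen edges (s,t), a the label function *)
definition auction_step ::
  "('v \<Rightarrow> 'v \<Rightarrow> real) \<Rightarrow> 'v set \<Rightarrow> 'v set \<Rightarrow>
   'v set \<times> ('v \<times> 'v) list \<times> ('v \<Rightarrow> nat) \<Rightarrow> 'v set \<times> ('v \<times> 'v) list \<times> ('v \<Rightarrow> nat)" where
  "auction_step c R T st = (case st of (A, W, a) \<Rightarrow>
     (let p = (SOME p. p \<in> (R \<union> A) \<times> (T - A) \<and>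
                  (\<forall>q \<in> (R \<union> A) \<times> (T - A). c (fst p) (snd p) \<le> c (fst q) (snd q)))
      in (insert (snd p) A, W @ [p], a(snd p := Suc (length W)))))"

definition auction ::
  "('v \<Rightarrow> 'v \<Rightarrow> real) \<Rightarrow> 'v set \<Rightarrow> 'v set \<Rightarrow> ('v \<times> 'v) list \<times> ('v \<Rightarrow> nat)" where
  "auction c R T = snd ((auction_step c R T ^^ card T) ({}, [], (\<lambda>_. 0)))"

definition wadj :: "('v \<times> 'v) list \<Rightarrow> 'v \<Rightarrow> 'v \<Rightarrow> bool" where
  "wadj W x y \<longleftrightarrow> (x, y) \<in> set W \<or> (y, x) \<in> set W"

definition wcomp :: "('v \<times> 'v) list \<Rightarrow> 'v \<Rightarrow> 'v set" where
  "wcomp W r = {v. (r, v) \<in> {(x, y). wadj W x y}\<^sup>*}"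

definition dfs_step :: "('v \<times> 'v) list \<Rightarrow> ('v \<Rightarrow> nat) \<Rightarrow> 'v list \<Rightarrow> 'v list" where
  "dfs_step W a L =
     (let t = last (filter (\<lambda>v. \<exists>s. wadj W v s \<and> s \<notin> set L) L);
          s = (SOME s. wadj W t s \<and> s \<notin> set L \<and>
                  (\<forall>s'. wadj W t s' \<and> s' \<notin> set L \<longrightarrow> a s \<le> a s'))
      in L @ [s])"

(* iterate "while P(r) does not contain all of V(r)"; n iterations suffice for n >= |T| *)
definition dfs_route :: "('v \<times> 'v) list \<Rightarrow> ('v \<Rightarrow> nat) \<Rightarrow> nat \<Rightarrow> 'v \<Rightarrow> 'v list" where
  "dfs_route W a n r =
     ((\<lambda>L. if wcomp W r \<subseteq> set L then L else dfs_step W a L) ^^ n) [r]"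

definition assign :: "('v \<Rightarrow> 'v \<Rightarrow> real) \<Rightarrow> 'v set \<Rightarrow> 'v set \<Rightarrow> 'v \<Rightarrow> 'v list" where
  "assign c R T r = (case auction c R T of (W, a) \<Rightarrow> dfs_route W a (card T) r)"

end

theory Submission
  imports Defs
begin

(* The auction is Prim's algorithm started from the whole robot set: every round buys the cheapest
   edge from R \<union> A to an unassigned task.  Its edges W form a forest in which every task hangs
   below a unique robot, and the usual exchange argument shows that W costs no more than any edge
   set joining every task to some robot -- in particular no more than the edges of any plan.
   DFShortcut traverses each tree in depth-first order.  By the triangle inequality, the shortcut
   from the last visited vertex to the next one is at most the cost of the tree path between them,
   so each tree edge is paid at most twice (once going down, once on the way back up), and every
   route costs at most twice its tree. *)

lemma rtrancl_enters_set:
  assumes "(x, y) \<in> r\<^sup>*" "x \<notin> S" "y \<in> S"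
  obtains a b where "(x, a) \<in> (Restr r (- S))\<^sup>*" "(a, b) \<in> r" "a \<notin> S" "b \<in> S"
  using assms
proof (induction arbitrary: thesis rule: converse_rtrancl_induct)
  case base
  then show ?case by simp
next
  case (step x z)
  show ?case
  proof (cases "z \<in> S")
    case True
    then show ?thesis
      using step by blast
  next
    case False
    with step obtain a b where "(z, a) \<in> (Restr r (- S))\<^sup>*" "(a, b) \<in> r" "a \<notin> S" "b \<in> S"
      by blast
    moreover have "(x, z) \<in> Restr r (- S)"
      using step False by auto
    ultimately show ?thesis
      using step.prems(1) converse_rtrancl_into_rtrancl by metis
  qed
qed

lemma rtrancl_avoids_or_reaches:
  assumes "(x, z) \<in> r\<^sup>*"
  shows "(x, z) \<in> (r - D)\<^sup>* \<or> (\<exists>(a, b)\<in>D. (x, a) \<in> (r - D)\<^sup>*)"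
  using assms
proof (induction rule: converse_rtrancl_induct)
  case (step x y)
  then show ?case
    by (cases "(x, y) \<in> D") (auto intro: converse_rtrancl_into_rtrancl)
qed simp

lemma sum_set_le_sum_list:
  fixes f :: "'a \<Rightarrow> real"
  shows "(\<And>x. x \<in> set xs \<Longrightarrow> f x \<ge> 0) \<Longrightarrow> sum f (set xs) \<le> sum_list (map f xs)"
proof (induction xs)
  case (Cons x xs)
  then show ?case
    by (cases "x \<in> set xs") (auto simp: insert_absorb add_increasing)
qed simp

lemma sum_UN_le:
  fixes f :: "'a \<Rightarrow> real"
  assumes "finite I" "\<And>i. i \<in> I \<Longrightarrow> finite (A i)" "\<And>x. x \<in> (\<Union>i\<in>I. A i) \<Longrightarrow> f x \<ge> 0"
  shows "sum f (\<Union>i\<in>I. A i) \<le> (\<Sum>i\<in>I. sum f (A i))"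
  using assms
proof (induction rule: finite_induct)
  case (insert i I)
  have "sum f (A i \<union> (\<Union>i\<in>I. A i)) \<le> sum f (A i) + sum f (\<Union>i\<in>I. A i)"
  proof -
    have "sum f (A i \<inter> (\<Union>i\<in>I. A i)) \<ge> 0"
      using insert.prems(2) by (intro sum_nonneg) blast
    then show ?thesis
      using sum.union_inter[of "A i" "\<Union>i\<in>I. A i" f] insert by simp
  qed
  then show ?case using insert by simp
qed simp

lemma pcost_snoc: "L \<noteq> [] \<Longrightarrow> pcost c (L @ [s]) = pcost c L + c (last L) s"
  by (induction c L rule: pcost.induct) auto

lemma pcost_eq_sum_list_zip: "pcost c xs = (\<Sum>(x, y)\<leftarrow>zip xs (tl xs). c x y)"
  by (induction c xs rule: pcost.induct) auto

lemma rtrancl_zip_tl_hd: "v \<in> set xs \<Longrightarrow> (hd xs, v) \<in> (set (zip xs (tl xs)))\<^sup>*"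
proof (induction xs)
  case (Cons x xs)
  show ?case
  proof (cases "v = x")
    case False
    with Cons.prems obtain y ys where xs: "xs = y # ys" and v: "v \<in> set xs"
      by (cases xs) auto
    let ?E = "set (zip (x # xs) (tl (x # xs)))"
    have "(y, v) \<in> (set (zip xs (tl xs)))\<^sup>*"
      using Cons.IH[OF v] xs by simp
    moreover have "set (zip xs (tl xs)) \<subseteq> ?E"
      using xs by auto
    ultimately have "(y, v) \<in> ?E\<^sup>*"
      using rtrancl_mono by blast
    moreover have "(x, y) \<in> ?E"
      using xs by simp
    ultimately have "(x, v) \<in> ?E\<^sup>*"
      by (rule converse_rtrancl_into_rtrancl[rotated])
    then show ?thesis
      by simp
  qed simp
qed simp

lemma set_zip_tl_subset: "set (zip xs (tl xs)) \<subseteq> set xs \<times> set xs"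
  using set_zip_leftD set_zip_rightD list.set_sel(2)[of xs] by fastforce

lemma metric_cost_nonneg: "metric_cost V c \<Longrightarrow> x \<in> V \<Longrightarrow> y \<in> V \<Longrightarrow> c x y \<ge> 0"
  unfolding metric_cost_def by blast

lemma metric_cost_sym: "metric_cost V c \<Longrightarrow> x \<in> V \<Longrightarrow> y \<in> V \<Longrightarrow> c x y = c y x"
  unfolding metric_cost_def by blast

lemma metric_cost_refl: "metric_cost V c \<Longrightarrow> x \<in> V \<Longrightarrow> c x x = 0"
  unfolding metric_cost_def by blast

lemma metric_cost_triangle:
  "metric_cost V c \<Longrightarrow> x \<in> V \<Longrightarrow> y \<in> V \<Longrightarrow> z \<in> V \<Longrightarrow> c x z \<le> c x y + c y z"
  unfolding metric_cost_def by blast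

definition connects_to :: "('v \<times> 'v) set \<Rightarrow> 'v set \<Rightarrow> 'v set \<Rightarrow> bool" where
  "connects_to F U S \<longleftrightarrow> (\<forall>u\<in>U. \<exists>s\<in>S. (u, s) \<in> (F \<union> F\<inverse>)\<^sup>*)"

(* The path in F from snd p to R \<union> A enters R \<union> A through an edge {a, b}, which the greedy
   edge p undercuts.  Deleting {a, b} keeps a joined to snd p by the earlier part of the path. *)
lemma greedy_edge_exchange:
  assumes met: "metric_cost (R \<union> T) c" and disj: "R \<inter> T = {}"
    and p: "p \<in> (R \<union> A) \<times> (T - A)"
    and p_min: "\<forall>q\<in>(R \<union> A) \<times> (T - A). c (fst p) (snd p) \<le> c (fst q) (snd q)"
    and F: "F \<subseteq> (R \<union> T) \<times> (R \<union> T)" and conn: "connects_to F (T - A) (R \<union> A)"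
  obtains e where "e \<in> F" "c (fst p) (snd p) \<le> c (fst e) (snd e)"
    "connects_to (F - {e}) (T - insert (snd p) A) (R \<union> insert (snd p) A)"
proof -
  define S where "S = R \<union> A"
  define t where "t = snd p"
  have t: "t \<in> T - A" "t \<notin> S"
    using p disj unfolding t_def S_def by auto
  then obtain y where "y \<in> S" "(t, y) \<in> (F \<union> F\<inverse>)\<^sup>*"
    using conn unfolding connects_to_def S_def by blast
  then obtain a b where path: "(t, a) \<in> (Restr (F \<union> F\<inverse>) (- S))\<^sup>*"
    and ab: "(a, b) \<in> F \<union> F\<inverse>" "a \<notin> S" "b \<in> S"
    using rtrancl_enters_set t(2) by metis
  have a: "a \<in> T - A" and b: "b \<in> R \<union> T"
    using F ab unfolding S_def by auto
  obtain e where e: "e \<in> F" "e \<in> {(a, b), (b, a)}"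
    using ab(1) by auto
  have "(b, a) \<in> (R \<union> A) \<times> (T - A)"
    using a ab(3) unfolding S_def by simp
  then have "c (fst p) (snd p) \<le> c b a"
    using p_min by fastforce
  also have "\<dots> = c (fst e) (snd e)"
    using e(2) metric_cost_sym[OF met] a b by auto
  finally have cost: "c (fst p) (snd p) \<le> c (fst e) (snd e)" .
  define F' where "F' = F - {e}"
  have avoid: "(F \<union> F\<inverse>) - {(a, b), (b, a)} \<subseteq> F' \<union> F'\<inverse>"
    using e(2) unfolding F'_def by auto
  have "Restr (F \<union> F\<inverse>) (- S) \<subseteq> F' \<union> F'\<inverse>"
    using avoid ab(3) by auto
  then have "(t, a) \<in> (F' \<union> F'\<inverse>)\<^sup>*"
    using path rtrancl_mono by blast
  then have a_t: "(a, t) \<in> (F' \<union> F'\<inverse>)\<^sup>*"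
    by (rule symD[OF sym_rtrancl[OF sym_Un_converse]])
  have "connects_to F' (T - insert t A) (R \<union> insert t A)"
    unfolding connects_to_def
  proof
    fix u assume "u \<in> T - insert t A"
    then obtain z where z: "z \<in> S" "(u, z) \<in> (F \<union> F\<inverse>)\<^sup>*"
      using conn unfolding connects_to_def S_def by blast
    have "(u, z) \<in> (F' \<union> F'\<inverse>)\<^sup>* \<or> (u, a) \<in> (F' \<union> F'\<inverse>)\<^sup>* \<or> (u, b) \<in> (F' \<union> F'\<inverse>)\<^sup>*"
      using rtrancl_avoids_or_reaches[OF z(2), of "{(a, b), (b, a)}"] rtrancl_mono[OF avoid] by blast
    then show "\<exists>s\<in>R \<union> insert t A. (u, s) \<in> (F' \<union> F'\<inverse>)\<^sup>*"
      using z(1) ab(3) a_t unfolding S_def by (blast intro: rtrancl_trans)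
  qed
  then show thesis
    using that e(1) cost unfolding F'_def t_def by blast
qed

definition auction_choice :: "('v \<Rightarrow> 'v \<Rightarrow> real) \<Rightarrow> 'v set \<Rightarrow> 'v set \<Rightarrow> 'v set \<Rightarrow> 'v \<times> 'v" where
  "auction_choice c R T A = (SOME p. p \<in> (R \<union> A) \<times> (T - A) \<and>
     (\<forall>q \<in> (R \<union> A) \<times> (T - A). c (fst p) (snd p) \<le> c (fst q) (snd q)))"

lemma auction_step_eq:
  "auction_step c R T (A, W, a) =
     (insert (snd (auction_choice c R T A)) A, W @ [auction_choice c R T A],
      a(snd (auction_choice c R T A) := Suc (length W)))"
  by (simp add: auction_step_def auction_choice_def Let_def)

lemma auction_choice_minimal:
  assumes "finite (R \<union> A)" "finite T" "R \<noteq> {}" "T - A \<noteq> {}"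
  shows "auction_choice c R T A \<in> (R \<union> A) \<times> (T - A) \<and>
    (\<forall>q\<in>(R \<union> A) \<times> (T - A).
      c (fst (auction_choice c R T A)) (snd (auction_choice c R T A)) \<le> c (fst q) (snd q))"
  unfolding auction_choice_def
proof (rule someI_ex)
  let ?S = "(R \<union> A) \<times> (T - A)" and ?f = "\<lambda>p. c (fst p) (snd p)"
  have fin: "finite ?S" and ne: "?S \<noteq> {}"
    using assms by auto
  have "arg_min_on ?f ?S \<in> ?S"
    by (rule arg_min_if_finite(1)[OF fin ne])
  moreover have "?f (arg_min_on ?f ?S) \<le> ?f q" if "q \<in> ?S" for q
    by (rule arg_min_least[OF fin ne that])
  ultimately show "\<exists>p. p \<in> ?S \<and> (\<forall>q\<in>?S. c (fst p) (snd p) \<le> c (fst q) (snd q))"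
    by (intro exI[of _ "arg_min_on ?f ?S"] conjI ballI)
qed

lemma auction_steps_cost_le:
  assumes fin: "finite R" "finite T" and disj: "R \<inter> T = {}" and "R \<noteq> {}"
    and met: "metric_cost (R \<union> T) c"
  shows "A \<subseteq> T \<Longrightarrow> card (T - A) = k \<Longrightarrow> finite F \<Longrightarrow> F \<subseteq> (R \<union> T) \<times> (R \<union> T) \<Longrightarrow>
    connects_to F (T - A) (R \<union> A) \<Longrightarrow>
    (\<Sum>(x, y)\<leftarrow>fst (snd ((auction_step c R T ^^ k) (A, W, a))). c x y)
      \<le> (\<Sum>(x, y)\<leftarrow>W. c x y) + (\<Sum>(x, y)\<in>F. c x y)"
proof (induction k arbitrary: A W a F)
  case 0
  have "(\<Sum>(x, y)\<in>F. c x y) \<ge> 0"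
    using 0 metric_cost_nonneg[OF met] by (intro sum_nonneg) auto
  then show ?case by simp
next
  case (Suc k)
  define p where "p = auction_choice c R T A"
  have "finite (R \<union> A)"
    using Suc.prems(1) fin finite_subset by auto
  moreover have "T - A \<noteq> {}"
    using Suc.prems(2) by (metis card.empty nat.distinct(1))
  ultimately have "p \<in> (R \<union> A) \<times> (T - A) \<and>
      (\<forall>q\<in>(R \<union> A) \<times> (T - A). c (fst p) (snd p) \<le> c (fst q) (snd q))"
    unfolding p_def by (rule auction_choice_minimal[OF _ fin(2) assms(4)])
  then have p: "p \<in> (R \<union> A) \<times> (T - A)"
    and p_min: "\<forall>q\<in>(R \<union> A) \<times> (T - A). c (fst p) (snd p) \<le> c (fst q) (snd q)"
    by blast+
  obtain e where e: "e \<in> F" "c (fst p) (snd p) \<le> c (fst e) (snd e)"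
    and conn: "connects_to (F - {e}) (T - insert (snd p) A) (R \<union> insert (snd p) A)"
    using greedy_edge_exchange[OF met disj p p_min Suc.prems(4,5)] by blast
  have "(\<Sum>(x, y)\<leftarrow>fst (snd ((auction_step c R T ^^ k)
        (insert (snd p) A, W @ [p], a(snd p := Suc (length W))))). c x y)
      \<le> (\<Sum>(x, y)\<leftarrow>W @ [p]. c x y) + (\<Sum>(x, y)\<in>F - {e}. c x y)"
  proof (rule Suc.IH)
    show "insert (snd p) A \<subseteq> T"
      using Suc.prems(1) p by auto
    show "card (T - insert (snd p) A) = k"
      using Suc.prems(2) p by (metis Diff_insert card_Diff_singleton diff_Suc_1 mem_Sigma_iff prod.collapse)
    show "finite (F - {e})" "F - {e} \<subseteq> (R \<union> T) \<times> (R \<union> T)"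
      using Suc.prems(3,4) by auto
  qed (rule conn)
  moreover have "(\<Sum>(x, y)\<in>F. c x y) = c (fst e) (snd e) + (\<Sum>(x, y)\<in>F - {e}. c x y)"
    using sum.remove[OF Suc.prems(3) e(1)] by (simp add: split_def)
  moreover have "(auction_step c R T ^^ Suc k) (A, W, a) =
      (auction_step c R T ^^ k) (insert (snd p) A, W @ [p], a(snd p := Suc (length W)))"
    by (simp only: funpow_Suc_right comp_apply auction_step_eq p_def)
  ultimately show ?case
    using e(2) by (simp add: split_def)
qed

definition auction_inv :: "'v set \<Rightarrow> 'v set \<Rightarrow> nat \<Rightarrow> 'v set \<times> ('v \<times> 'v) list \<times> ('v \<Rightarrow> nat) \<Rightarrow> bool"
  where "auction_inv R T k st \<longleftrightarrow> (case st of (A, W, a) \<Rightarrow>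
     A = snd ` set W \<and> A \<subseteq> T \<and> distinct (map snd W) \<and> length W = k \<and>
     (\<forall>(s, t)\<in>set W. s \<in> R \<union> A \<and> a s < a t) \<and> (\<forall>v. a v \<le> k))"

lemma auction_inv_funpow:
  assumes fin: "finite R" "finite T" and disj: "R \<inter> T = {}" and "R \<noteq> {}"
  shows "k \<le> card T \<Longrightarrow> auction_inv R T k ((auction_step c R T ^^ k) ({}, [], \<lambda>_. 0))"
proof (induction k)
  case 0
  then show ?case by (simp add: auction_inv_def)
next
  case (Suc k)
  obtain A W a where st: "(auction_step c R T ^^ k) ({}, [], \<lambda>_. 0) = (A, W, a)"
    by (metis prod.collapse)
  have inv: "A = snd ` set W" "A \<subseteq> T" "distinct (map snd W)" "length W = k"
    "\<forall>(s, t)\<in>set W. s \<in> R \<union> A \<and> a s < a t" "\<forall>v. a v \<le> k"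
    using Suc st by (auto simp: auction_inv_def)
  define p where "p = auction_choice c R T A"
  have "finite (R \<union> A)"
    using inv(2) fin finite_subset by auto
  moreover have "card A = k"
    using inv(1,3,4) distinct_card by fastforce
  then have "T - A \<noteq> {}"
    using Suc.prems inv(2) by auto
  ultimately have p: "p \<in> (R \<union> A) \<times> (T - A)"
    unfolding p_def by (rule conjunct1[OF auction_choice_minimal[OF _ fin(2) assms(4)]])
  define t where "t = snd p"
  have t: "t \<in> T" "t \<notin> A" "t \<notin> R"
    using p disj unfolding t_def by auto
  have old_edges: "s \<in> R \<union> A \<and> s \<noteq> t \<and> u \<noteq> t \<and> a s < a u" if "(s, u) \<in> set W" for s u
    using inv(1,5) t that by force
  have new_edge: "fst p \<in> R \<union> A" "fst p \<noteq> t" "a (fst p) < Suc k"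
    using p t inv(6) by (auto simp: less_Suc_eq_le)
  have "\<forall>(s, u)\<in>set (W @ [p]). s \<in> R \<union> insert t A \<and> (a(t := Suc k)) s < (a(t := Suc k)) u"
    using old_edges new_edge unfolding t_def by auto
  moreover have "(auction_step c R T ^^ Suc k) ({}, [], \<lambda>_. 0) = (insert t A, W @ [p], a(t := Suc k))"
    using st inv(4) by (simp add: auction_step_eq p_def t_def)
  ultimately show ?case
    using inv t unfolding auction_inv_def by (auto simp: t_def le_Suc_eq)
qed

lemma auction_result:
  assumes fin: "finite R" "finite T" and "R \<inter> T = {}" "R \<noteq> {}"
    and auc: "auction c R T = (W, a)"
  shows "(auction_step c R T ^^ card T) ({}, [], \<lambda>_. 0) = (T, W, a)"
    and "snd ` set W = T" "distinct (map snd W)" "\<forall>(s, t)\<in>set W. s \<in> R \<union> T \<and> a s < a t"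
proof -
  obtain A where st: "(auction_step c R T ^^ card T) ({}, [], \<lambda>_. 0) = (A, W, a)"
    using auc unfolding auction_def by (metis prod.collapse snd_conv)
  then have inv: "A = snd ` set W" "A \<subseteq> T" "distinct (map snd W)" "length W = card T"
    "\<forall>(s, t)\<in>set W. s \<in> R \<union> A \<and> a s < a t"
    using auction_inv_funpow[OF assms(1-4), of "card T" c] by (auto simp: auction_inv_def)
  have "card A = card T"
    using inv(1,3,4) distinct_card by fastforce
  then have "A = T"
    using card_subset_eq[OF fin(2) inv(2)] by simp
  then show "(auction_step c R T ^^ card T) ({}, [], \<lambda>_. 0) = (T, W, a)"
    and "snd ` set W = T" "distinct (map snd W)" "\<forall>(s, t)\<in>set W. s \<in> R \<union> T \<and> a s < a t"
    using st inv by auto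
qed

lemma auction_cost_le:
  assumes "finite R" "finite T" "R \<inter> T = {}" "R \<noteq> {}" "metric_cost (R \<union> T) c"
    and "auction c R T = (W, a)"
    and "finite F" "F \<subseteq> (R \<union> T) \<times> (R \<union> T)" "connects_to F T R"
  shows "(\<Sum>(x, y)\<leftarrow>W. c x y) \<le> (\<Sum>(x, y)\<in>F. c x y)"
  using auction_steps_cost_le[OF assms(1-5), of "{}" "card T" F "[]" "\<lambda>_. 0"]
    auction_result(1)[OF assms(1-4,6)] assms(7-9) by simp

definition unfinished :: "('v \<times> 'v) list \<Rightarrow> 'v list \<Rightarrow> 'v \<Rightarrow> bool" where
  "unfinished W L v \<longleftrightarrow> (\<exists>s. wadj W v s \<and> s \<notin> set L)"

lemma dfs_step_extends:
  assumes "\<exists>u\<in>set L. unfinished W L u"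
  obtains ys t zs s where "L = ys @ t # zs" "wadj W t s" "s \<notin> set L"
    "\<forall>z\<in>set zs. \<not> unfinished W L z" "dfs_step W a L = L @ [s]"
proof -
  obtain ys t zs where L: "L = ys @ t # zs" "unfinished W L t" "\<forall>z\<in>set zs. \<not> unfinished W L z"
    using split_list_last_prop[OF assms] by blast
  then have "last (filter (unfinished W L) L) = t"
    by (simp add: filter_empty_conv)
  then have t: "last (filter (\<lambda>v. \<exists>s. wadj W v s \<and> s \<notin> set L) L) = t"
    unfolding unfinished_def .
  let ?P = "\<lambda>s. wadj W t s \<and> s \<notin> set L"
  obtain s0 where "?P s0"
    using L(2) unfolding unfinished_def by blast
  then have "\<exists>s. ?P s \<and> (\<forall>s'. ?P s' \<longrightarrow> a s \<le> a s')"
    by (rule ex_has_least_nat)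
  then have "?P (SOME s. ?P s \<and> (\<forall>s'. ?P s' \<longrightarrow> a s \<le> a s'))"
    by (rule someI2_ex) blast
  moreover have "dfs_step W a L = L @ [SOME s. ?P s \<and> (\<forall>s'. ?P s' \<longrightarrow> a s \<le> a s')]"
    unfolding dfs_step_def t Let_def by (simp add: conj_assoc)
  ultimately show thesis
    using that L by blast
qed

locale parent_forest =
  fixes R T :: "'v set" and c :: "'v \<Rightarrow> 'v \<Rightarrow> real"
    and W :: "('v \<times> 'v) list" and a :: "'v \<Rightarrow> nat"
  assumes finite_R: "finite R" and finite_T: "finite T" and disjoint: "R \<inter> T = {}"
    and metric: "metric_cost (R \<union> T) c"
    and targets: "snd ` set W = T" and distinct_targets: "distinct (map snd W)"
    and edges: "\<forall>(s, t)\<in>set W. s \<in> R \<union> T \<and> a s < a t"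
begin

definition parent :: "'v \<Rightarrow> 'v" where
  "parent t = (THE s. (s, t) \<in> set W)"

lemma edge_iff_parent: "(s, t) \<in> set W \<longleftrightarrow> t \<in> T \<and> s = parent t"
proof -
  have unique: "s = s'" if "(s, t) \<in> set W" "(s', t) \<in> set W" for s s' t
    using that distinct_targets inj_onD[of snd "set W" "(s, t)" "(s', t)"] by (simp add: distinct_map)
  have "(parent t, t) \<in> set W" if "(s, t) \<in> set W" for s t
    unfolding parent_def using that by (rule theI) (rule unique[OF _ that])
  then show ?thesis
    using targets unique by force
qed

lemma parent_mem: "t \<in> T \<Longrightarrow> parent t \<in> R \<union> T"
  using edges edge_iff_parent by blast

lemma parent_label_less: "t \<in> T \<Longrightarrow> a (parent t) < a t"
  using edges edge_iff_parent by blast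

lemma wadj_iff: "wadj W x y \<longleftrightarrow> (y \<in> T \<and> x = parent y) \<or> (x \<in> T \<and> y = parent x)"
  unfolding wadj_def edge_iff_parent by blast

definition parent_rel :: "('v \<times> 'v) set" where
  "parent_rel = {(v, parent v) | v. v \<in> T}"

lemma parent_rel_iff: "(v, w) \<in> parent_rel \<longleftrightarrow> v \<in> T \<and> w = parent v"
  unfolding parent_rel_def by blast

lemma single_valued_parent_rel: "single_valued parent_rel"
  unfolding single_valued_def parent_rel_iff by blast

lemma ancestor_cases: "(v, w) \<in> parent_rel\<^sup>* \<Longrightarrow> v = w \<or> v \<in> T"
  by (erule converse_rtranclE) (auto simp: parent_rel_iff)

lemma ancestor_mem: "(v, w) \<in> parent_rel\<^sup>* \<Longrightarrow> v \<in> R \<union> T \<Longrightarrow> w \<in> R \<union> T"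
  by (induction rule: rtrancl_induct) (auto simp: parent_rel_iff dest: parent_mem)

lemma ancestor_label_le: "(v, w) \<in> parent_rel\<^sup>* \<Longrightarrow> a w \<le> a v"
  by (induction rule: rtrancl_induct)
    (auto simp: parent_rel_iff dest: parent_label_less)

lemma ancestor_root_unique:
  "(v, r) \<in> parent_rel\<^sup>* \<Longrightarrow> (v, r') \<in> parent_rel\<^sup>* \<Longrightarrow> r \<in> R \<Longrightarrow> r' \<in> R \<Longrightarrow> r = r'"
  using single_valued_confluent[OF single_valued_parent_rel] ancestor_cases disjoint by blast

definition depth_cost :: "'v \<Rightarrow> real" where
  "depth_cost v = (\<Sum>u | u \<in> T \<and> (v, u) \<in> parent_rel\<^sup>*. c (parent u) u)"

lemma depth_cost_root:
  assumes "v \<notin> T"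
  shows "depth_cost v = 0"
proof -
  have "{u. u \<in> T \<and> (v, u) \<in> parent_rel\<^sup>*} = {}"
    using ancestor_cases assms by blast
  then show ?thesis
    unfolding depth_cost_def by (metis sum.empty)
qed

lemma depth_cost_parent:
  assumes v: "v \<in> T"
  shows "depth_cost v = depth_cost (parent v) + c (parent v) v"
proof -
  let ?U = "{u. u \<in> T \<and> (parent v, u) \<in> parent_rel\<^sup>*}"
  have "(v, u) \<in> parent_rel\<^sup>* \<longleftrightarrow> u = v \<or> (parent v, u) \<in> parent_rel\<^sup>*" for u
    using v by (auto simp: parent_rel_iff elim: converse_rtranclE intro: converse_rtrancl_into_rtrancl)
  then have "{u. u \<in> T \<and> (v, u) \<in> parent_rel\<^sup>*} = insert v ?U"
    using v by blast
  moreover have "v \<notin> ?U"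
    using ancestor_label_le parent_label_less[OF v] by fastforce
  moreover have "finite ?U"
    using finite_T by simp
  ultimately show ?thesis
    unfolding depth_cost_def by simp
qed

lemma depth_cost_nonneg: "depth_cost v \<ge> 0"
  unfolding depth_cost_def
  by (intro sum_nonneg) (auto intro: metric_cost_nonneg[OF metric] dest: parent_mem)

lemma cost_le_depth_cost_diff:
  "(u, t) \<in> parent_rel\<^sup>* \<Longrightarrow> u \<in> R \<union> T \<Longrightarrow> c u t \<le> depth_cost u - depth_cost t"
proof (induction rule: converse_rtrancl_induct)
  case base
  then show ?case
    using metric_cost_refl[OF metric] by simp
next
  case (step u y)
  then have u: "u \<in> T" "y = parent u" and y: "y \<in> R \<union> T"
    by (auto simp: parent_rel_iff dest: parent_mem)
  have t: "t \<in> R \<union> T"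
    using step.hyps(2) y by (rule ancestor_mem)
  have "c u t \<le> c y u + c y t"
    using metric_cost_triangle[OF metric step.prems y t] metric_cost_sym[OF metric step.prems y]
    by simp
  also have "\<dots> \<le> c y u + depth_cost y - depth_cost t"
    using step.IH y by simp
  finally show ?case
    using depth_cost_parent[OF u(1)] u(2) by simp
qed

definition parents_first :: "'v list \<Rightarrow> bool" where
  "parents_first L \<longleftrightarrow> (\<forall>ys v zs. L = ys @ v # zs \<longrightarrow> v \<in> T \<longrightarrow> parent v \<in> set ys)"

lemma parents_first_snoc:
  assumes "parents_first L" and "s \<in> T \<Longrightarrow> parent s \<in> set L"
  shows "parents_first (L @ [s])"
  unfolding parents_first_def
proof (intro allI impI)
  fix ys v zs
  assume split: "L @ [s] = ys @ v # zs" and "v \<in> T"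
  show "parent v \<in> set ys"
  proof (cases zs rule: rev_cases)
    case Nil
    then show ?thesis
      using split assms(2) \<open>v \<in> T\<close> by simp
  next
    case (snoc zs' z)
    then have "L = ys @ v # zs'"
      using split by simp
    then show ?thesis
      using assms(1) \<open>v \<in> T\<close> unfolding parents_first_def by blast
  qed
qed

lemma ancestor_precedes:
  assumes "(u, t) \<in> parent_rel\<^sup>+" and "parents_first L"
  shows "L = ys @ u # zs \<Longrightarrow> t \<in> set ys"
  using assms(1)
proof (induction arbitrary: ys zs rule: converse_trancl_induct)
  case (base u)
  then show ?case
    using assms(2) unfolding parents_first_def parent_rel_iff by blast
next
  case (step u z)
  then have "z \<in> set ys"
    using assms(2) unfolding parents_first_def parent_rel_iff by blast
  then obtain ys1 ys2 where "ys = ys1 @ z # ys2"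
    by (meson split_list)
  then have "t \<in> set ys1"
    using step.prems by (intro step.IH[of ys1 "ys2 @ u # zs"]) simp
  then show ?case
    using \<open>ys = ys1 @ z # ys2\<close> by simp
qed

lemma stack_snoc:
  assumes distinct: "distinct L" and first: "parents_first L"
    and stack: "\<forall>u\<in>set L. unfinished W L u \<longrightarrow> (last L, u) \<in> parent_rel\<^sup>*"
    and L: "L = ys @ t # zs" and t: "unfinished W L t"
    and zs: "\<forall>z\<in>set zs. \<not> unfinished W L z"
    and s: "(s, t) \<in> parent_rel"
  shows "\<forall>u\<in>set (L @ [s]). unfinished W (L @ [s]) u \<longrightarrow> (s, u) \<in> parent_rel\<^sup>*"
proof (intro ballI impI)
  fix u
  assume u: "u \<in> set (L @ [s])" "unfinished W (L @ [s]) u"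
  show "(s, u) \<in> parent_rel\<^sup>*"
  proof (cases "u = s")
    case False
    with u have uL: "u \<in> set L" and "unfinished W L u"
      unfolding unfinished_def by auto
    then have "(last L, u) \<in> parent_rel\<^sup>*" "(last L, t) \<in> parent_rel\<^sup>*"
      using stack t L by auto
    then have "(u, t) \<in> parent_rel\<^sup>* \<or> (t, u) \<in> parent_rel\<^sup>*"
      by (rule single_valued_confluent[OF single_valued_parent_rel])
    moreover have "(u, t) \<notin> parent_rel\<^sup>+"
    proof
      assume ut: "(u, t) \<in> parent_rel\<^sup>+"
      then have "u \<noteq> t"
        using distinct L ancestor_precedes[OF ut first, of ys zs] by auto
      then have "u \<in> set ys"
        using uL L zs \<open>unfinished W L u\<close> by auto
      then obtain ys1 ys2 where "ys = ys1 @ u # ys2"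
        by (meson split_list)
      then have "t \<in> set ys1"
        using ancestor_precedes[OF ut first] L by simp
      then show False
        using distinct L \<open>ys = ys1 @ u # ys2\<close> by auto
    qed
    ultimately have "(t, u) \<in> parent_rel\<^sup>*"
      by (auto simp: rtrancl_eq_or_trancl)
    then show ?thesis
      by (rule converse_rtrancl_into_rtrancl[OF s])
  qed simp
qed

(* The vertices of L that still have unvisited neighbours lie on the tree path from last L up to r
   (they form the DFS stack), and depth_cost (last L) prepays the walk back up that path. *)
definition dfs_inv :: "'v \<Rightarrow> 'v list \<Rightarrow> bool" where
  "dfs_inv r L \<longleftrightarrow> distinct L \<and> r \<in> set L \<and> (\<forall>v\<in>set L. (v, r) \<in> parent_rel\<^sup>*) \<and>
     parents_first L \<and> (\<forall>u\<in>set L. unfinished W L u \<longrightarrow> (last L, u) \<in> parent_rel\<^sup>*) \<and>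
     pcost c L + depth_cost (last L) \<le> 2 * (\<Sum>v\<in>set L \<inter> T. c (parent v) v)"

lemma dfs_inv_init:
  assumes "r \<in> R"
  shows "dfs_inv r [r]"
proof -
  have "r \<notin> T"
    using assms disjoint by blast
  then show ?thesis
    by (auto simp: dfs_inv_def parents_first_def Cons_eq_append_conv depth_cost_root)
qed

lemma dfs_step_child:
  assumes inv: "dfs_inv r L" and incomplete: "\<not> wcomp W r \<subseteq> set L"
  obtains ys t zs s where "L = ys @ t # zs" "s \<in> T" "parent s = t" "s \<notin> set L"
    "\<forall>z\<in>set zs. \<not> unfinished W L z" "dfs_step W a L = L @ [s]"
proof -
  obtain v where path: "(r, v) \<in> {(x, y). wadj W x y}\<^sup>*" and v: "v \<notin> set L"
    using incomplete unfolding wcomp_def by blast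
  have "r \<in> set L"
    using inv unfolding dfs_inv_def by blast
  then obtain x y where "(x, y) \<in> {(x, y). wadj W x y}" "x \<notin> - set L" "y \<in> - set L"
    using rtrancl_enters_set[OF path, of "- set L"] v by blast
  then have "\<exists>u\<in>set L. unfinished W L u"
    unfolding unfinished_def by blast
  then obtain ys t zs s where L: "L = ys @ t # zs" and adj: "wadj W t s" and s: "s \<notin> set L"
    and rest: "\<forall>z\<in>set zs. \<not> unfinished W L z" "dfs_step W a L = L @ [s]"
    by (rule dfs_step_extends)
  have "\<not> (t \<in> T \<and> s = parent t)"
    using inv s L unfolding dfs_inv_def parents_first_def by auto
  then have "s \<in> T" "parent s = t"
    using adj wadj_iff by auto
  then show thesis
    using that L s rest by blast
qed

lemma dfs_inv_step:
  assumes r: "r \<in> R" and inv: "dfs_inv r L" and incomplete: "\<not> wcomp W r \<subseteq> set L"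
  shows "dfs_inv r (dfs_step W a L)"
proof -
  obtain ys t zs s where L: "L = ys @ t # zs" and s: "s \<in> T" "parent s = t" "s \<notin> set L"
    and zs: "\<forall>z\<in>set zs. \<not> unfinished W L z" and step: "dfs_step W a L = L @ [s]"
    using dfs_step_child[OF inv incomplete] by blast
  have distinct: "distinct L" and rL: "r \<in> set L" and to_root: "\<forall>v\<in>set L. (v, r) \<in> parent_rel\<^sup>*"
    and first: "parents_first L"
    and stack: "\<forall>u\<in>set L. unfinished W L u \<longrightarrow> (last L, u) \<in> parent_rel\<^sup>*"
    and cost: "pcost c L + depth_cost (last L) \<le> 2 * (\<Sum>v\<in>set L \<inter> T. c (parent v) v)"
    using inv unfolding dfs_inv_def by blast+
  have st: "(s, t) \<in> parent_rel"
    using s parent_rel_iff by blast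
  have tL: "t \<in> set L" and t_unf: "unfinished W L t"
    using L s wadj_iff unfolding unfinished_def by auto
  have L_mem: "set L \<subseteq> R \<union> T"
    using to_root ancestor_cases r by blast
  have "last L \<in> set L"
    using rL by (intro last_in_set) auto
  then have last: "last L \<in> R \<union> T" "(last L, t) \<in> parent_rel\<^sup>*"
    using L_mem stack tL t_unf by auto
  have t_mem: "t \<in> R \<union> T"
    using tL L_mem by blast
  have "pcost c (L @ [s]) = pcost c L + c (last L) s"
    using rL by (intro pcost_snoc) auto
  also have "\<dots> \<le> pcost c L + c (last L) t + c t s"
    using metric_cost_triangle[OF metric last(1) t_mem, of s] s(1) by simp
  also have "\<dots> \<le> pcost c L + depth_cost (last L) - depth_cost t + c t s"
    using cost_le_depth_cost_diff[OF last(2) last(1)] by simp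
  finally have "pcost c (L @ [s]) + depth_cost s \<le> 2 * (\<Sum>v\<in>set L \<inter> T. c (parent v) v) + 2 * c t s"
    using cost depth_cost_parent[OF s(1)] s(2) by simp
  also have "\<dots> = 2 * (\<Sum>v\<in>set (L @ [s]) \<inter> T. c (parent v) v)"
    using s finite_T by (simp add: insert_absorb)
  finally have "pcost c (L @ [s]) + depth_cost (last (L @ [s]))
      \<le> 2 * (\<Sum>v\<in>set (L @ [s]) \<inter> T. c (parent v) v)"
    by simp
  moreover have "\<forall>v\<in>set (L @ [s]). (v, r) \<in> parent_rel\<^sup>*"
    using to_root tL st by (auto intro: converse_rtrancl_into_rtrancl)
  moreover have "parents_first (L @ [s])"
    using first tL s by (intro parents_first_snoc) auto
  moreover have "\<forall>u\<in>set (L @ [s]). unfinished W (L @ [s]) u \<longrightarrow> (last (L @ [s]), u) \<in> parent_rel\<^sup>*"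
    using stack_snoc[OF distinct first stack L t_unf zs st] by simp
  ultimately show ?thesis
    unfolding step dfs_inv_def using distinct rL s(3) by simp
qed

lemma dfs_inv_route: "r \<in> R \<Longrightarrow> dfs_inv r (dfs_route W a n r)"
  by (induction n) (auto simp: dfs_route_def dfs_inv_init dfs_inv_step)

lemma dfs_route_cost_le:
  assumes "r \<in> R"
  shows "pcost c (dfs_route W a n r) \<le> 2 * (\<Sum>v\<in>set (dfs_route W a n r) \<inter> T. c (parent v) v)"
  using dfs_inv_route[OF assms, of n] depth_cost_nonneg[of "last (dfs_route W a n r)"]
  unfolding dfs_inv_def by linarith

lemma tree_cost_eq: "(\<Sum>(x, y)\<leftarrow>W. c x y) = (\<Sum>v\<in>T. c (parent v) v)"
proof -
  have "(\<Sum>(x, y)\<leftarrow>W. c x y) = (\<Sum>(x, y)\<in>set W. c x y)"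
    using distinct_targets by (simp add: sum_list_distinct_conv_sum_set distinct_map)
  also have "\<dots> = (\<Sum>e\<in>set W. c (parent (snd e)) (snd e))"
    by (intro sum.cong) (auto simp: edge_iff_parent)
  also have "\<dots> = (\<Sum>v\<in>T. c (parent v) v)"
    using sum.reindex[of snd "set W" "\<lambda>v. c (parent v) v"] distinct_targets targets
    by (simp add: distinct_map)
  finally show ?thesis .
qed

lemma dfs_routes_cost_le: "(\<Sum>r\<in>R. pcost c (dfs_route W a n r)) \<le> 2 * (\<Sum>(x, y)\<leftarrow>W. c x y)"
proof -
  let ?V = "\<lambda>r. set (dfs_route W a n r) \<inter> T" and ?f = "\<lambda>v. c (parent v) v"
  have disjoint_routes: "?V r \<inter> ?V r' = {}" if "r \<in> R" "r' \<in> R" "r \<noteq> r'" for r r'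
    using dfs_inv_route[OF that(1)] dfs_inv_route[OF that(2)] ancestor_root_unique that
    unfolding dfs_inv_def by blast
  have "(\<Sum>r\<in>R. pcost c (dfs_route W a n r)) \<le> (\<Sum>r\<in>R. 2 * sum ?f (?V r))"
    using dfs_route_cost_le by (intro sum_mono) auto
  also have "\<dots> = 2 * sum ?f (\<Union>r\<in>R. ?V r)"
    using sum.UNION_disjoint[of R ?V ?f] finite_R disjoint_routes by (simp add: sum_distrib_left)
  also have "\<dots> \<le> 2 * sum ?f T"
    using finite_T parent_mem by (auto intro!: sum_mono2 metric_cost_nonneg[OF metric])
  finally show ?thesis
    using tree_cost_eq by simp
qed

end

lemma plan_edges:
  assumes plan: "is_plan R T P" and fin: "finite R" and met: "metric_cost (R \<union> T) c"
  obtains F where "finite F" "F \<subseteq> (R \<union> T) \<times> (R \<union> T)" "connects_to F T R"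
    "(\<Sum>(x, y)\<in>F. c x y) \<le> plan_cost c R P"
proof -
  let ?E = "\<lambda>r. set (zip (P r) (tl (P r)))"
  define F where "F = (\<Union>r\<in>R. ?E r)"
  have routes: "hd (P r) = r" "set (P r) \<subseteq> R \<union> T" if "r \<in> R" for r
    using plan that unfolding is_plan_def by blast+
  then have F_sub: "F \<subseteq> (R \<union> T) \<times> (R \<union> T)"
    unfolding F_def using set_zip_tl_subset by blast
  have conn: "connects_to F T R"
    unfolding connects_to_def
  proof
    fix t assume "t \<in> T"
    then obtain r where r: "r \<in> R" "t \<in> set (P r)"
      using plan unfolding is_plan_def by blast
    then have "(r, t) \<in> (?E r)\<^sup>*"
      using rtrancl_zip_tl_hd[OF r(2)] routes(1) by simp
    moreover have "?E r \<subseteq> F \<union> F\<inverse>"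
      unfolding F_def using r(1) by blast
    ultimately have "(r, t) \<in> (F \<union> F\<inverse>)\<^sup>*"
      using rtrancl_mono by blast
    then have "(t, r) \<in> (F \<union> F\<inverse>)\<^sup>*"
      by (rule symD[OF sym_rtrancl[OF sym_Un_converse]])
    then show "\<exists>r\<in>R. (t, r) \<in> (F \<union> F\<inverse>)\<^sup>*"
      using r(1) by blast
  qed
  have nonneg: "(\<lambda>(x, y). c x y) e \<ge> 0" if "e \<in> F" for e
    using that F_sub metric_cost_nonneg[OF met] by auto
  have "(\<Sum>(x, y)\<in>F. c x y) \<le> (\<Sum>r\<in>R. \<Sum>(x, y)\<in>?E r. c x y)"
    unfolding F_def using fin nonneg[unfolded F_def] by (intro sum_UN_le) auto
  also have "\<dots> \<le> (\<Sum>r\<in>R. pcost c (P r))"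
    unfolding pcost_eq_sum_list_zip
    using nonneg[unfolded F_def] by (intro sum_mono sum_set_le_sum_list) auto
  finally have "(\<Sum>(x, y)\<in>F. c x y) \<le> plan_cost c R P"
    unfolding plan_cost_def .
  moreover have "finite F"
    unfolding F_def using fin by simp
  ultimately show thesis
    using that F_sub conn by blast
qed

lemma plan_exists:
  assumes "finite T" "R \<inter> T = {}" "r0 \<in> R"
  shows "\<exists>P. is_plan R T P"
proof -
  obtain xs where xs: "set xs = T"
    using finite_list[OF assms(1)] by blast
  have "is_plan R T (\<lambda>r. if r = r0 then r0 # xs else [r])"
    using assms xs unfolding is_plan_def robot_route_def by (auto split: if_splits)
  then show ?thesis
    by blast
qed

lemma auction_cost_le_plan_cost:
  assumes "finite R" "finite T" "R \<inter> T = {}" "R \<noteq> {}" "metric_cost (R \<union> T) c"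
    and "auction c R T = (W, a)" and "is_plan R T P"
  shows "(\<Sum>(x, y)\<leftarrow>W. c x y) \<le> plan_cost c R P"
proof -
  obtain F where "finite F" "F \<subseteq> (R \<union> T) \<times> (R \<union> T)" "connects_to F T R"
    and "(\<Sum>(x, y)\<in>F. c x y) \<le> plan_cost c R P"
    using plan_edges[OF assms(7,1,5)] by blast
  then show ?thesis
    using auction_cost_le[OF assms(1-6)] by fastforce
qed

theorem lemma5:
  fixes R T :: "'v set" and c :: "'v \<Rightarrow> 'v \<Rightarrow> real"
  assumes "finite R" and "finite T" and "R \<inter> T = {}" and "R \<noteq> {}"
    and "card (R \<union> T) \<ge> 3"
    and "metric_cost (R \<union> T) c"
    and "edge_injective (R \<union> T) c"
  shows "plan_cost c R (assign c R T) \<le> 2 * minsum_cost c R T"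
proof -
  obtain W a where auc: "auction c R T = (W, a)"
    by fastforce
  interpret parent_forest R T c W a
    using auction_result(2-4)[OF assms(1-4) auc] assms(1-3,6) by unfold_locales
  have "plan_cost c R (assign c R T) \<le> 2 * (\<Sum>(x, y)\<leftarrow>W. c x y)"
    using dfs_routes_cost_le by (simp add: plan_cost_def assign_def auc)
  moreover have "(\<Sum>(x, y)\<leftarrow>W. c x y) \<le> minsum_cost c R T"
    unfolding minsum_cost_def
  proof (rule cInf_greatest)
    show "plan_cost c R ` {P. is_plan R T P} \<noteq> {}"
      using plan_exists[OF assms(2,3)] assms(4) by blast
  qed (use auction_cost_le_plan_cost[OF assms(1-4,6) auc] in blast)
  ultimately show ?thesis
    by linarith
qed

end
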